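(* Consider a parallel-link network with $n=2$ links, unit demand and latencies $\ell_1,\ell_2\in\mathcal{L}_c$. Let $t\in\mathcal{T}(\infty)$ and suppose $x_1(t)>0$ and $x_2(t)>0$. Then $x_1(0)\ge x_1(t)$ if and only if $x_1(t)\ge \frac12$.
   Context: $\mathcal{L}_c$: strictly increasing, convex, continuously differentiable functions $\mathbb{R}_+\to\mathbb{R}_+$. Flows $x\in\mathbb{R}^2_+$ with $x_1+x_2=1$. For tolls $t\in\mathbb{R}^2_+$, $x(t)$ is the unique Wardrop equilibrium for $t$ (for all $i,j$ with $x_i>0$: $\ell_i(x_i)+t_i\le\ell_j(x_j)+t_j$); $x(0)$ is the untolled Wardrop equilibrium. Profit $\Pi_i(t)=t_ix_i(t)$. $\mathcal{T}(\infty)$: toll vectors $t\in\mathbb{R}^2_+$ such that for every $i$ and every $t'_i\ge 0$, $\Pi_i(t_i,t_{-i})\ge\Pi_i(t'_i,t_{-i})$ (flow recomputed). *)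

theory Defs
  imports "HOL-Analysis.Analysis"
begin

definition latency_class :: "(real \<Rightarrow> real) \<Rightarrow> bool" where
  "latency_class l \<longleftrightarrow>
     (\<forall>x\<ge>0. l x \<ge> 0) \<and>
     strict_mono_on {0..} l \<and>
     convex_on {0..} l \<and>
     (\<exists>l'. (\<forall>x\<ge>0. (l has_real_derivative l' x) (at x within {0..})) \<and> continuous_on {0..} l')"

definition wardrop :: "(real \<Rightarrow> real) \<Rightarrow> (real \<Rightarrow> real) \<Rightarrow> real \<times> real \<Rightarrow> real \<times> real \<Rightarrow> bool" where
  "wardrop l1 l2 t x \<longleftrightarrow>
     fst x \<ge> 0 \<and> snd x \<ge> 0 \<and> fst x + snd x = 1 \<and>
     (fst x > 0 \<longrightarrow> l1 (fst x) + fst t \<le> l2 (snd x) + snd t) \<and>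
     (snd x > 0 \<longrightarrow> l2 (snd x) + snd t \<le> l1 (fst x) + fst t)"

definition eqflow :: "(real \<Rightarrow> real) \<Rightarrow> (real \<Rightarrow> real) \<Rightarrow> real \<times> real \<Rightarrow> real \<times> real" where
  "eqflow l1 l2 t = (THE x. wardrop l1 l2 t x)"

definition profit1 :: "(real \<Rightarrow> real) \<Rightarrow> (real \<Rightarrow> real) \<Rightarrow> real \<times> real \<Rightarrow> real" where
  "profit1 l1 l2 t = fst t * fst (eqflow l1 l2 t)"

definition profit2 :: "(real \<Rightarrow> real) \<Rightarrow> (real \<Rightarrow> real) \<Rightarrow> real \<times> real \<Rightarrow> real" where
  "profit2 l1 l2 t = snd t * snd (eqflow l1 l2 t)"

definition T_inf :: "(real \<Rightarrow> real) \<Rightarrow> (real \<Rightarrow> real) \<Rightarrow> (real \<times> real) set" where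
  "T_inf l1 l2 = {t. fst t \<ge> 0 \<and> snd t \<ge> 0 \<and>
     (\<forall>s\<ge>0. profit1 l1 l2 t \<ge> profit1 l1 l2 (s, snd t)) \<and>
     (\<forall>s\<ge>0. profit2 l1 l2 t \<ge> profit2 l1 l2 (fst t, s))}"

end

theory Submission
  imports Defs
begin

text \<open>At an interior equilibrium, owner \<open>i\<close>'s best response is characterised by the
  first-order condition \<open>t\<^sub>i = x\<^sub>i (\<ell>\<^sub>1'(x\<^sub>1) + \<ell>\<^sub>2'(x\<^sub>2))\<close>, obtained by parametrising
  its tolls by the flow they induce.  Hence \<open>t\<^sub>1 - t\<^sub>2 = (x\<^sub>1 - x\<^sub>2)(\<ell>\<^sub>1' + \<ell>\<^sub>2')\<close> with a
  positive factor, so \<open>t\<^sub>1 \<ge> t\<^sub>2\<close> iff \<open>x\<^sub>1 \<ge> 1/2\<close>.  On the other hand the equilibrium flow on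
  link 1 is strictly antitone in the toll difference \<open>t\<^sub>1 - t\<^sub>2\<close> as long as it is interior, so
  \<open>t\<^sub>1 \<ge> t\<^sub>2\<close> iff \<open>x\<^sub>1(0) \<ge> x\<^sub>1(t)\<close>.\<close>

lemma latency_class_continuous_on:
  assumes "latency_class l"
  shows "continuous_on {0..} l"
proof -
  obtain l' where "\<forall>x\<ge>0. (l has_real_derivative l' x) (at x within {0..})"
    using assms unfolding latency_class_def by blast
  then show ?thesis
    unfolding continuous_on_eq_continuous_within by (metis DERIV_continuous atLeast_iff)
qed

lemma latency_class_less:
  assumes "latency_class l" "0 \<le> a" "a < b"
  shows "l a < l b"
  using assms unfolding latency_class_def strict_mono_on_def by auto

text \<open>Convexity puts \<open>l\<close> above its tangent at \<open>x\<close>, so \<open>l' x * x \<ge> l x - l 0 > 0\<close>.\<close>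
lemma latency_class_deriv_pos:
  assumes "latency_class l" "x > 0"
  obtains d where "(l has_real_derivative d) (at x)" "d > 0"
proof -
  obtain l' where l': "\<forall>x\<ge>0. (l has_real_derivative l' x) (at x within {0..})"
    and convex: "convex_on {0..} l"
    using assms(1) unfolding latency_class_def by blast
  have within: "(l has_real_derivative l' x) (at x within {0..})" using l' assms(2) by simp
  have "at x within {0..} = at x" using assms(2) by (intro at_within_interior) auto
  with within have at: "(l has_real_derivative l' x) (at x)" by simp
  have "l 0 - l x \<ge> l' x * (0 - x)"
    by (rule convex_on_imp_above_tangent[OF convex _ _ _ within])
      (use assms(2) in \<open>auto intro: convex_connected\<close>)
  moreover have "l 0 < l x" using latency_class_less[OF assms(1) _ assms(2)] by simp
  ultimately have "l' x * x > 0" by simp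
  with assms(2) have "l' x > 0" by (simp add: zero_less_mult_iff)
  with at show thesis by (rule that)
qed

lemma wardrop_interior_eq:
  assumes "wardrop l1 l2 t x" "fst x > 0" "snd x > 0"
  shows "l1 (fst x) + fst t = l2 (snd x) + snd t"
  using assms unfolding wardrop_def by auto

lemma wardrop_fst_antimono:
  assumes "latency_class l1" "latency_class l2"
    and "wardrop l1 l2 t x" "wardrop l1 l2 t' y"
    and "fst t - snd t \<le> fst t' - snd t'"
  shows "fst y \<le> fst x"
proof (rule ccontr)
  assume "\<not> fst y \<le> fst x"
  then have less: "fst x < fst y" by simp
  have x: "fst x \<ge> 0" "fst x + snd x = 1" and y: "snd y \<ge> 0" "fst y + snd y = 1"
    using assms(3,4) unfolding wardrop_def by auto
  with less have "fst y > 0" "snd x > 0" "snd y < snd x" by linarith+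
  then have "l1 (fst y) + fst t' \<le> l2 (snd y) + snd t'"
    and "l2 (snd x) + snd t \<le> l1 (fst x) + fst t"
    using assms(3,4) unfolding wardrop_def by auto
  moreover have "l1 (fst x) < l1 (fst y)" by (rule latency_class_less[OF assms(1) x(1) less])
  moreover have "l2 (snd y) < l2 (snd x)"
    by (rule latency_class_less[OF assms(2) y(1) \<open>snd y < snd x\<close>])
  ultimately show False using assms(5) by linarith
qed

lemma wardrop_fst_strict_antimono:
  assumes "latency_class l1" "latency_class l2"
    and "wardrop l1 l2 t x" "wardrop l1 l2 t' y"
    and "fst t - snd t < fst t' - snd t'" "fst x > 0" "snd x > 0"
  shows "fst y < fst x"
proof -
  have "fst y \<le> fst x" by (rule wardrop_fst_antimono[OF assms(1-4)]) (use assms(5) in linarith)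
  moreover have "fst y \<noteq> fst x"
  proof
    assume "fst y = fst x"
    moreover have "snd y = 1 - fst y" "snd x = 1 - fst x"
      using assms(3,4) unfolding wardrop_def by auto
    ultimately have "l1 (fst x) + fst t' = l2 (snd x) + snd t'"
      using wardrop_interior_eq[OF assms(4)] assms(6,7) by simp
    with wardrop_interior_eq[OF assms(3,6,7)] assms(5) show False by linarith
  qed
  ultimately show ?thesis by simp
qed

lemma wardrop_unique:
  assumes "latency_class l1" "latency_class l2" "wardrop l1 l2 t x" "wardrop l1 l2 t y"
  shows "x = y"
proof -
  have "fst x = fst y"
    using wardrop_fst_antimono[OF assms(1-4)] wardrop_fst_antimono[OF assms(1,2,4,3)] by simp
  moreover have "snd x = snd y" using assms(3,4) calculation unfolding wardrop_def by auto
  ultimately show ?thesis by (simp add: prod_eq_iff)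
qed

lemma wardrop_exists:
  assumes "latency_class l1" "latency_class l2"
  shows "\<exists>x. wardrop l1 l2 t x"
proof -
  define f where "f y = l1 y + fst t - l2 (1 - y) - snd t" for y
  have cont: "continuous_on {0..} l1" "continuous_on {0..} l2"
    using assms by (auto intro: latency_class_continuous_on)
  have "continuous_on {0..1} (\<lambda>y. l2 (1 - y))"
    by (rule continuous_on_compose2[OF cont(2)]) (auto intro!: continuous_intros)
  then have "continuous_on {0..1} f" unfolding f_def
    by (intro continuous_intros continuous_on_subset[OF cont(1)]) auto
  consider "f 0 \<ge> 0" | "f 1 \<le> 0" | "f 0 < 0" "f 1 > 0" by fastforce
  then show ?thesis
  proof cases
    case 1
    then have "wardrop l1 l2 t (0, 1)" unfolding wardrop_def f_def by auto
    then show ?thesis by blast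
  next
    case 2
    then have "wardrop l1 l2 t (1, 0)" unfolding wardrop_def f_def by auto
    then show ?thesis by blast
  next
    case 3
    then obtain y where "0 \<le> y" "y \<le> 1" "f y = 0"
      using IVT'[of f 0 0 1] \<open>continuous_on {0..1} f\<close> by auto
    then have "wardrop l1 l2 t (y, 1 - y)" unfolding wardrop_def f_def by auto
    then show ?thesis by blast
  qed
qed

lemma eqflow_wardrop:
  assumes "latency_class l1" "latency_class l2"
  shows "wardrop l1 l2 t (eqflow l1 l2 t)"
  unfolding eqflow_def
  using wardrop_exists[OF assms] wardrop_unique[OF assms] by (metis theI)

lemma eqflow_eqI:
  assumes "latency_class l1" "latency_class l2" "wardrop l1 l2 t x"
  shows "eqflow l1 l2 t = x"
  using eqflow_wardrop[OF assms(1,2)] wardrop_unique[OF assms(1,2)] assms(3) by blast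

lemma eqflow_interior:
  assumes "latency_class l1" "latency_class l2"
    and "fst (eqflow l1 l2 t) > 0" "snd (eqflow l1 l2 t) > 0"
  shows "fst (eqflow l1 l2 t) < 1" "snd (eqflow l1 l2 t) = 1 - fst (eqflow l1 l2 t)"
    and "fst t = snd t + l2 (1 - fst (eqflow l1 l2 t)) - l1 (fst (eqflow l1 l2 t))"
proof -
  have W: "wardrop l1 l2 t (eqflow l1 l2 t)" by (rule eqflow_wardrop[OF assms(1,2)])
  then show "snd (eqflow l1 l2 t) = 1 - fst (eqflow l1 l2 t)" unfolding wardrop_def by simp
  with assms(4) show "fst (eqflow l1 l2 t) < 1" by simp
  show "fst t = snd t + l2 (1 - fst (eqflow l1 l2 t)) - l1 (fst (eqflow l1 l2 t))"
    using wardrop_interior_eq[OF W assms(3,4)] \<open>snd (eqflow l1 l2 t) = _\<close> by simp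
qed

lemma eqflow_swap:
  assumes "latency_class l1" "latency_class l2"
  shows "eqflow l2 l1 (b, a) = (snd (eqflow l1 l2 (a, b)), fst (eqflow l1 l2 (a, b)))"
proof -
  have "wardrop l2 l1 (b, a) (snd (eqflow l1 l2 (a, b)), fst (eqflow l1 l2 (a, b)))"
    using eqflow_wardrop[OF assms, of "(a, b)"] unfolding wardrop_def by auto
  then show ?thesis using eqflow_eqI[OF assms(2,1)] by blast
qed

lemma profit2_swap:
  assumes "latency_class l1" "latency_class l2"
  shows "profit2 l1 l2 (a, b) = profit1 l2 l1 (b, a)"
  unfolding profit1_def profit2_def using eqflow_swap[OF assms] by simp

lemma eqflow_inducing_toll:
  assumes "latency_class l1" "latency_class l2" "0 \<le> y" "y \<le> 1"
  shows "eqflow l1 l2 (t2 + l2 (1 - y) - l1 y, t2) = (y, 1 - y)"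
  using assms by (intro eqflow_eqI) (auto simp: wardrop_def)

lemma best_response_toll_pos:
  assumes L: "latency_class l1" "latency_class l2"
    and best: "\<forall>s\<ge>0. profit1 l1 l2 (t1, t2) \<ge> profit1 l1 l2 (s, t2)"
    and flow: "eqflow l1 l2 (t1, t2) = (x1, x2)" "x1 > 0" "x2 > 0"
  shows "t1 > 0"
proof -
  have x: "x1 < 1" "t1 = t2 + l2 (1 - x1) - l1 x1"
    using eqflow_interior[OF L, of "(t1, t2)"] flow by simp_all
  have "t1 * x1 \<ge> 0 * fst (eqflow l1 l2 (0, t2))" using best flow unfolding profit1_def by auto
  with flow(2) have "t1 \<ge> 0" by (simp add: zero_le_mult_iff)
  define s where "s = t2 + l2 (1 - x1/2) - l1 (x1/2)"
  have "l1 (x1/2) < l1 x1" "l2 (1 - x1) < l2 (1 - x1/2)"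
    using latency_class_less[OF L(1), of "x1/2" x1] latency_class_less[OF L(2), of "1 - x1" "1 - x1/2"]
      x flow(2) by auto
  with x \<open>t1 \<ge> 0\<close> have "s > 0" unfolding s_def by linarith
  \<comment> \<open>Halving the flow requires a strictly larger, hence positive, toll: a profitable deviation
    if \<open>t1 = 0\<close>.\<close>
  then have "profit1 l1 l2 (s, t2) > 0"
    unfolding profit1_def s_def using eqflow_inducing_toll[OF L, of "x1/2"] x flow(2) by simp
  moreover have "profit1 l1 l2 (s, t2) \<le> profit1 l1 l2 (t1, t2)" using best \<open>s > 0\<close> by simp
  ultimately have "profit1 l1 l2 (t1, t2) > 0" by linarith
  with flow(2) show ?thesis unfolding profit1_def flow(1) by (simp add: zero_less_mult_iff)
qed

lemma DERIV_local_max_eventually: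
  fixes f :: "real \<Rightarrow> real"
  assumes "(f has_real_derivative D) (at x)" "eventually (\<lambda>y. f y \<le> f x) (at x)"
  shows "D = 0"
  using has_derivative_local_max assms unfolding has_field_derivative_def by (metis mult_1_right)

text \<open>First-order condition: as a function of the induced flow \<open>y\<close>, owner 1's profit is
  \<open>y \<cdot> (t\<^sub>2 + \<ell>\<^sub>2(1 - y) - \<ell>\<^sub>1(y))\<close>, which attains a local maximum at the equilibrium flow.\<close>
lemma best_response_toll_eq:
  assumes L: "latency_class l1" "latency_class l2"
    and best: "\<forall>s\<ge>0. profit1 l1 l2 (t1, t2) \<ge> profit1 l1 l2 (s, t2)"
    and flow: "eqflow l1 l2 (t1, t2) = (x1, x2)" "x1 > 0" "x2 > 0"
    and D1: "(l1 has_real_derivative d1) (at x1)"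
    and D2: "(l2 has_real_derivative d2) (at x2)"
  shows "t1 = x1 * (d1 + d2)"
proof -
  define S where "S y = t2 + l2 (1 - y) - l1 y" for y
  define P where "P y = y * S y" for y
  have x: "x1 < 1" "x2 = 1 - x1" "S x1 = t1"
    using eqflow_interior[OF L, of "(t1, t2)"] flow unfolding S_def by simp_all
  have P_le: "P y \<le> P x1" if "0 \<le> y" "y \<le> 1" "S y \<ge> 0" for y
    using best that x flow(1) eqflow_inducing_toll[OF L that(1,2)]
    unfolding profit1_def P_def S_def by (metis fst_conv mult.commute)
  have "((\<lambda>y. 1 - y) has_real_derivative -1) (at x1)" by (auto intro!: derivative_eq_intros)
  with D2[unfolded x(2)] have "((\<lambda>y. l2 (1 - y)) has_real_derivative d2 * -1) (at x1)"
    by (rule DERIV_chain2[where g="\<lambda>y. 1 - y"])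
  then have DS: "(S has_real_derivative - d2 - d1) (at x1)"
    unfolding S_def using D1 by (auto intro!: derivative_eq_intros)
  then have DP: "(P has_real_derivative S x1 + x1 * (- d2 - d1)) (at x1)"
    unfolding P_def[abs_def] by (auto intro!: derivative_eq_intros)
  have "S x1 > 0" using best_response_toll_pos[OF L best flow] x(3) by simp
  then have "eventually (\<lambda>y. S y > 0) (at x1)"
    using DERIV_isCont[OF DS] unfolding isCont_def by (rule order_tendstoD(1)[rotated])
  moreover have "eventually (\<lambda>y. 0 < y \<and> y < 1) (at x1)"
    using eventually_at_in_open'[OF open_greaterThanLessThan, of x1 0 1] x(1) flow(2) by simp
  ultimately have "eventually (\<lambda>y. P y \<le> P x1) (at x1)"
    by eventually_elim (auto intro: P_le)
  with DP have "S x1 + x1 * (- d2 - d1) = 0" by (rule DERIV_local_max_eventually)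
  with x(3) show ?thesis by (simp add: algebra_simps)
qed

theorem mainTheorem9:
  fixes l1 l2 :: "real \<Rightarrow> real" and t :: "real \<times> real"
  assumes "latency_class l1" and "latency_class l2"
    and "t \<in> T_inf l1 l2"
    and "fst (eqflow l1 l2 t) > 0" and "snd (eqflow l1 l2 t) > 0"
  shows "fst (eqflow l1 l2 (0, 0)) \<ge> fst (eqflow l1 l2 t)
           \<longleftrightarrow> fst (eqflow l1 l2 t) \<ge> 1 / 2"
proof -
  note L = assms(1,2)
  obtain t1 t2 where t: "t = (t1, t2)" by (cases t)
  obtain x1 x2 where flow: "eqflow l1 l2 (t1, t2) = (x1, x2)" by (cases "eqflow l1 l2 (t1, t2)")
  have x: "x1 > 0" "x2 > 0" "x2 = 1 - x1"
    using assms(4,5) eqflow_interior(2)[OF L assms(4,5)] unfolding t flow by simp_all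
  have best1: "\<forall>s\<ge>0. profit1 l1 l2 (t1, t2) \<ge> profit1 l1 l2 (s, t2)"
    using assms(3) unfolding T_inf_def t by simp
  have "\<forall>s\<ge>0. profit2 l1 l2 (t1, t2) \<ge> profit2 l1 l2 (t1, s)"
    using assms(3) unfolding T_inf_def t by simp
  then have best2: "\<forall>s\<ge>0. profit1 l2 l1 (t2, t1) \<ge> profit1 l2 l1 (s, t1)"
    unfolding profit2_swap[OF L] .
  obtain d1 where D1: "(l1 has_real_derivative d1) (at x1)" "d1 > 0"
    using latency_class_deriv_pos[OF L(1) x(1)] .
  obtain d2 where D2: "(l2 has_real_derivative d2) (at x2)" "d2 > 0"
    using latency_class_deriv_pos[OF L(2) x(2)] .
  have "t1 = x1 * (d1 + d2)" by (rule best_response_toll_eq[OF L best1 flow x(1,2) D1(1) D2(1)])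
  moreover have "t2 = x2 * (d2 + d1)"
    using best_response_toll_eq[OF L(2,1) best2 _ x(2,1) D2(1) D1(1)] eqflow_swap[OF L] flow by simp
  ultimately have "t1 - t2 = (2 * x1 - 1) * (d1 + d2)" using x(3) by (simp add: algebra_simps)
  then have "t1 \<ge> t2 \<longleftrightarrow> 0 \<le> (2 * x1 - 1) * (d1 + d2)" by linarith
  also have "\<dots> \<longleftrightarrow> x1 \<ge> 1/2" using D1(2) D2(2) by (simp add: zero_le_mult_iff mult.commute)
  finally have "t1 \<ge> t2 \<longleftrightarrow> x1 \<ge> 1/2" .
  moreover have "t1 \<ge> t2 \<longleftrightarrow> fst (eqflow l1 l2 (0, 0)) \<ge> x1"
  proof -
    have W0: "wardrop l1 l2 (0, 0) (eqflow l1 l2 (0, 0))"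
      and W: "wardrop l1 l2 (t1, t2) (x1, x2)"
      using eqflow_wardrop[OF L, of "(0, 0)"] eqflow_wardrop[OF L, of "(t1, t2)"] flow by simp_all
    show ?thesis
    proof
      show "t1 \<ge> t2 \<Longrightarrow> fst (eqflow l1 l2 (0, 0)) \<ge> x1"
        using wardrop_fst_antimono[OF L W0 W] by simp
      show "fst (eqflow l1 l2 (0, 0)) \<ge> x1 \<Longrightarrow> t1 \<ge> t2"
        using wardrop_fst_strict_antimono[OF L W W0] x(1,2) by fastforce
    qed
  qed
  ultimately show ?thesis unfolding t flow by simp
qed

end
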